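(* Let $V$ be a finite dimensional vector space over a field $\mathbb{K}$ of characteristic zero, and let $u,v_0,\ldots,v_n\in\widehat L(V)$ satisfy $|\exp(u)|\in\big|\sum_{j=0}^n\mathbb{K}[[v_j]]\big|$. Then $|u^m|\in\sum_{j=0}^n\mathbb{K}|v_j^m|$ for all $m\ge0$.
   Context: $\widehat T(V)=\prod_{m\ge0}V^{\otimes m}$ is the completed tensor algebra and $\widehat L(V)$ the completed free Lie algebra on $V$ (primitive elements of $\widehat T(V)$; they have no constant term). For $v\in\widehat L(V)$, $\mathbb{K}[[v]]\subset\widehat T(V)$ is the set of convergent series $\sum_{k\ge0}c_kv^k$, $c_k\in\mathbb{K}$. $|\widehat T(V)|$ is the quotient of $\widehat T(V)$ by the closure of the span of commutators, with projection $x\mapsto|x|$, and $|S|$ denotes the image of a subset $S$. *)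

theory Defs
  imports Main
begin

text \<open>V is a finite-dimensional K-vector space with basis indexed by the finite type 'a.
  Then V^{\<otimes>m} has basis the words of length m over 'a, and an element of the completed
  tensor algebra T^(V) = prod_m V^{\<otimes>m} is a function from words to coefficients.\<close>

type_synonym ('a, 'k) tser = "'a list \<Rightarrow> 'k"

definition tzero :: "('a, 'k::field) tser" where
  "tzero = (\<lambda>_. 0)"

definition tone :: "('a, 'k::field) tser" where
  "tone = (\<lambda>w. if w = [] then 1 else 0)"

definition tmul :: "('a, 'k::field) tser \<Rightarrow> ('a, 'k) tser \<Rightarrow> ('a, 'k) tser" where
  "tmul f g = (\<lambda>w. \<Sum>i\<le>length w. f (take i w) * g (drop i w))"

primrec tpow :: "('a, 'k::field) tser \<Rightarrow> nat \<Rightarrow> ('a, 'k) tser" where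
  "tpow f 0 = tone"
| "tpow f (Suc k) = tmul f (tpow f k)"

text \<open>The convergent series sum_k c_k v^k for v without constant term: the coefficient of a
  word w only receives contributions from k \<le> length w.\<close>
definition fseries :: "(nat \<Rightarrow> 'k::field) \<Rightarrow> ('a, 'k) tser \<Rightarrow> ('a, 'k) tser" where
  "fseries c v = (\<lambda>w. \<Sum>k\<le>length w. c k * tpow v k w)"

definition pseries_set :: "('a, 'k::field) tser \<Rightarrow> ('a, 'k) tser set" where
  "pseries_set v = range (\<lambda>c. fseries c v)"

definition texp :: "('a, 'k::field) tser \<Rightarrow> ('a, 'k) tser" where
  "texp u = fseries (\<lambda>k. 1 / of_nat (fact k)) u"

text \<open>Shuffles with multiplicity; the coproduct of T^(V) (with V primitive) has
  coefficient of x \<otimes> y in \<Delta>f equal to the sum of f over all shuffles of x and y.\<close>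
fun shuffle :: "'a list \<Rightarrow> 'a list \<Rightarrow> 'a list list" where
  "shuffle [] ys = [ys]"
| "shuffle xs [] = [xs]"
| "shuffle (x # xs) (y # ys) =
     map ((#) x) (shuffle xs (y # ys)) @ map ((#) y) (shuffle (x # xs) ys)"

text \<open>Primitive elements: \<Delta> f = f \<otimes> 1 + 1 \<otimes> f, written coefficientwise.\<close>
definition primitive :: "('a, 'k::field) tser \<Rightarrow> bool" where
  "primitive f \<longleftrightarrow>
     (\<forall>x y. sum_list (map f (shuffle x y)) =
        (if y = [] then f x else 0) + (if x = [] then f y else 0))"

definition free_lie :: "('a, 'k::field) tser set" where
  "free_lie = {f. primitive f}"

text \<open>Span of commutators ab - ba (closed under scalars since c(ab-ba) = (ca)b - b(ca)).\<close>
inductive_set comm_span :: "('a, 'k::field) tser set" where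
  zero: "tzero \<in> comm_span"
| step: "x \<in> comm_span \<Longrightarrow> (\<lambda>w. x w + tmul a b w - tmul b a w) \<in> comm_span"

text \<open>Closure in the inverse-limit (degree-filtration) topology of T^(V).\<close>
definition comm_closure :: "('a, 'k::field) tser set" where
  "comm_closure = {f. \<forall>N. \<exists>g\<in>comm_span. \<forall>w. length w < N \<longrightarrow> f w = g w}"

text \<open>|x| \<in> |S| in |T^(V)| = T^(V) / closure of commutator span.\<close>
definition trace_in :: "('a, 'k::field) tser \<Rightarrow> ('a, 'k) tser set \<Rightarrow> bool" where
  "trace_in x S \<longleftrightarrow> (\<exists>s\<in>S. (\<lambda>w. x w - s w) \<in> comm_closure)"

end

theory Submission
  imports Defs "HOL-Computational_Algebra.Polynomial"
begin

text \<open>Let \<open>X = exp u - \<Sum>\<^sub>j s\<^sub>j\<close> with \<open>s\<^sub>j = \<Sum>\<^sub>k c\<^sub>j\<^sub>k v\<^sub>j\<^sup>k\<close>; it lies in the closed commutator span, and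
  \<open>X = \<Sum>\<^sub>k Y\<^sub>k\<close> with \<open>Y\<^sub>k = u\<^sup>k/k! - \<Sum>\<^sub>j c\<^sub>j\<^sub>k v\<^sub>j\<^sup>k\<close>. The Adams operations \<open>\<psi>\<^sup>N = \<mu>\<^sup>N \<circ> \<Delta>\<^sup>N\<close> act
  on a product of \<open>k\<close> primitive elements by \<open>N\<^sup>k\<close>, so \<open>\<psi>\<^sup>N X = \<Sum>\<^sub>k N\<^sup>k Y\<^sub>k\<close>. They commute with brackets
  \<open>[z, -]\<close> by letters, and these brackets are dense in the commutator span, so the closed commutator
  span is \<open>\<psi>\<^sup>N\<close>-stable. Inverting a Vandermonde matrix in \<open>N\<close> isolates each \<open>Y\<^sub>m\<close>, which therefore
  lies in the closed commutator span too; \<open>m! Y\<^sub>m\<close> is the required relation.\<close>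

section \<open>The concatenation product\<close>

lemma tmul_Nil [simp]: "tmul f g [] = f [] * g []"
  by (simp add: tmul_def)

lemma tmul_Cons: "tmul f g (a # w) = f [] * g (a # w) + tmul (\<lambda>t. f (a # t)) g w"
  unfolding tmul_def by (simp add: sum.atMost_Suc_shift del: sum.atMost_Suc)

lemma tmul_zero_left: "tmul (\<lambda>_. 0) g w = 0"
  by (simp add: tmul_def)

lemma tmul_sum_left:
  "tmul (\<lambda>t. \<Sum>k\<in>K. c k * f k t) g w = (\<Sum>k\<in>K. c k * tmul (f k) g w)"
  unfolding tmul_def sum_distrib_left sum_distrib_right by (subst sum.swap) (simp add: ac_simps)

lemma tmul_sum_right:
  "tmul g (\<lambda>t. \<Sum>k\<in>K. c k * f k t) w = (\<Sum>k\<in>K. c k * tmul g (f k) w)"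
  unfolding tmul_def sum_distrib_left by (subst sum.swap) (simp add: ac_simps)

lemma tmul_add_scale_left: "tmul (\<lambda>t. c * f t + g t) h w = c * tmul f h w + tmul g h w"
  unfolding tmul_def by (simp add: algebra_simps sum.distrib sum_distrib_left)

lemma tmul_cong_left:
  "(\<And>t. length t \<le> length w \<Longrightarrow> f t = f' t) \<Longrightarrow> tmul f g w = tmul f' g w"
  unfolding tmul_def by (intro sum.cong refl) simp

lemma tmul_cong_right:
  "(\<And>t. length t \<le> length w \<Longrightarrow> g t = g' t) \<Longrightarrow> tmul f g w = tmul f g' w"
  unfolding tmul_def by (intro sum.cong refl) simp

lemma tmul_assoc: "tmul (tmul f g) h w = tmul f (tmul g h) w"
proof (induction w arbitrary: f)
  case (Cons a w)
  have "(\<lambda>t. tmul f g (a # t)) = (\<lambda>t. f [] * g (a # t) + tmul (\<lambda>s. f (a # s)) g t)"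
    by (simp add: tmul_Cons)
  then show ?case
    by (simp add: tmul_Cons tmul_add_scale_left Cons.IH algebra_simps)
qed simp

lemma tmul_tone_left: "tmul tone g w = g w"
proof (induction w)
  case (Cons a w)
  have "(\<lambda>t. tone (a # t)) = (\<lambda>_. 0)"
    by (simp add: tone_def)
  then show ?case
    by (simp add: tmul_Cons tmul_zero_left tone_def)
qed (simp add: tone_def)

lemma tmul_tone_right: "tmul g tone w = g w"
  by (induction w arbitrary: g) (simp_all add: tmul_Cons tone_def)

lemma tpow_add: "tpow v (a + b) w = tmul (tpow v a) (tpow v b) w"
proof (induction a arbitrary: w)
  case 0
  then show ?case by (simp add: tmul_tone_left)
next
  case (Suc a)
  then have "tpow v (a + b) = tmul (tpow v a) (tpow v b)" by blast
  then show ?case by (simp add: tmul_assoc)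
qed

lemma tpow_eq_0_if_shorter:
  assumes "v [] = 0" and "length w < k"
  shows "tpow v k w = 0"
  using assms(2)
proof (induction k arbitrary: w)
  case (Suc k)
  have "v (take i w) * tpow v k (drop i w) = 0" if "i \<le> length w" for i
    using Suc that assms(1) by (cases "i = 0") auto
  then show ?case
    unfolding tpow.simps tmul_def by (intro sum.neutral) simp
qed simp

section \<open>The coproduct\<close>

text \<open>\<open>coprod f x y\<close> is the coefficient of \<open>x \<otimes> y\<close> in \<open>\<Delta> f\<close>.\<close>

definition coprod :: "('a, 'k::field) tser \<Rightarrow> 'a list \<Rightarrow> 'a list \<Rightarrow> 'k" where
  "coprod f x y = sum_list (map f (shuffle x y))"

lemma coprod_Nil_left [simp]: "coprod f [] = f"
  by (simp add: coprod_def fun_eq_iff)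

lemma coprod_Nil_right [simp]: "coprod f x [] = f x"
  by (cases x) (simp_all add: coprod_def)

lemma coprod_Cons_Cons:
  "coprod f (a # x) (b # y) = coprod (\<lambda>t. f (a # t)) x (b # y) + coprod (\<lambda>t. f (b # t)) (a # x) y"
  by (simp add: coprod_def o_def)

lemma coprod_zero: "coprod (\<lambda>_. 0) x y = 0"
  by (simp add: coprod_def)

lemma coprod_add: "coprod (\<lambda>s. f s + g s) x y = coprod f x y + coprod g x y"
  by (simp add: coprod_def sum_list_addf)

lemma coprod_diff: "coprod (\<lambda>s. f s - g s) x y = coprod f x y - coprod g x y"
  by (simp add: coprod_def sum_list_subtractf)

lemma coprod_scale: "coprod (\<lambda>s. c * f s) x y = c * coprod f x y"
  by (simp add: coprod_def sum_list_const_mult)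

lemma coprod_if: "coprod (\<lambda>t. if P then f t else 0) x y = (if P then coprod f x y else 0)"
  by (simp add: coprod_zero)

lemma coprod_indicator_Nil:
  "coprod (\<lambda>t. if t = [] then c else 0) x y = (if x = [] \<and> y = [] then c else 0)"
  by (cases x; cases y) (simp_all add: coprod_Cons_Cons coprod_zero)

lemma length_shuffle: "s \<in> set (shuffle x y) \<Longrightarrow> length s = length x + length y"
  by (induction x y arbitrary: s rule: shuffle.induct) auto

lemma coprod_cong:
  "(\<And>s. length s = length x + length y \<Longrightarrow> f s = g s) \<Longrightarrow> coprod f x y = coprod g x y"
  unfolding coprod_def by (intro arg_cong[where f = sum_list] map_cong refl) (auto dest: length_shuffle)

lemma coprod_tone: "coprod tone x y = tone x * tone y"
proof (cases x; cases y)
  fix a x' b y' assume "x = a # x'" "y = b # y'"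
  moreover have "(\<lambda>t. tone (c # t)) = (\<lambda>_. 0)" for c :: 'a
    by (simp add: tone_def fun_eq_iff)
  ultimately show ?thesis
    by (simp add: coprod_Cons_Cons coprod_zero tone_def)
qed (simp_all add: tone_def)

lemma coprod_tmul:
  "coprod (tmul f g) x y =
     (\<Sum>i\<le>length x. \<Sum>j\<le>length y.
        coprod f (take i x) (take j y) * coprod g (drop i x) (drop j y))"
proof (induction x y arbitrary: f rule: shuffle.induct)
  case (3 a x b y)
  define fa where "fa = (\<lambda>t. f (a # t))"
  define fb where "fb = (\<lambda>t. f (b # t))"
  have tmul_Cons_fun: "(\<lambda>t. tmul f g (c # t)) = (\<lambda>t. f [] * g (c # t) + tmul (\<lambda>t. f (c # t)) g t)"
    for c
    by (simp add: tmul_Cons)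
  have "coprod (tmul f g) (a # x) (b # y) =
      f [] * coprod g (a # x) (b # y) + coprod (tmul fa g) x (b # y) + coprod (tmul fb g) (a # x) y"
    unfolding coprod_Cons_Cons[of "tmul f g"] tmul_Cons_fun coprod_add coprod_scale
      coprod_Cons_Cons[of g] fa_def fb_def
    by (simp add: algebra_simps)
  also have "coprod (tmul fa g) x (b # y) =
      (\<Sum>i\<le>length x. fa (take i x) * coprod g (drop i x) (b # y)) +
      (\<Sum>i\<le>length x. \<Sum>j\<le>length y. coprod fa (take i x) (b # take j y) * coprod g (drop i x) (drop j y))"
    unfolding "3.IH"(1) by (simp add: sum.atMost_Suc_shift sum.distrib del: sum.atMost_Suc)
  also have "coprod (tmul fb g) (a # x) y =
      (\<Sum>j\<le>length y. fb (take j y) * coprod g (a # x) (drop j y)) +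
      (\<Sum>i\<le>length x. \<Sum>j\<le>length y. coprod fb (a # take i x) (take j y) * coprod g (drop i x) (drop j y))"
    unfolding "3.IH"(2) by (simp add: sum.atMost_Suc_shift del: sum.atMost_Suc)
  also have "(\<Sum>i\<le>length (a # x). \<Sum>j\<le>length (b # y).
        coprod f (take i (a # x)) (take j (b # y)) * coprod g (drop i (a # x)) (drop j (b # y))) =
      (f [] * coprod g (a # x) (b # y) + (\<Sum>j\<le>length y. fb (take j y) * coprod g (a # x) (drop j y))) +
      ((\<Sum>i\<le>length x. fa (take i x) * coprod g (drop i x) (b # y)) +
       (\<Sum>i\<le>length x. \<Sum>j\<le>length y. (coprod fa (take i x) (b # take j y) +
          coprod fb (a # take i x) (take j y)) * coprod g (drop i x) (drop j y)))"
    by (simp add: sum.atMost_Suc_shift coprod_Cons_Cons fa_def fb_def sum.distrib del: sum.atMost_Suc)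
  ultimately show ?case
    by (simp add: distrib_right sum.distrib algebra_simps)
qed (simp_all add: tmul_def)

lemma primitive_coprod:
  "primitive v \<Longrightarrow> coprod v x y = (if y = [] then v x else 0) + (if x = [] then v y else 0)"
  unfolding primitive_def coprod_def by blast

lemma primitive_Nil:
  assumes "primitive v"
  shows "v [] = 0"
proof -
  have "v [] = v [] + v []"
    using primitive_coprod[OF assms, of "[]" "[]"] by (simp only: coprod_Nil_left simp_thms if_True)
  then show ?thesis
    by (simp only: add_cancel_right_right)
qed

lemma sum_atMost_length_take_Nil:
  "(\<Sum>j\<le>length y. if take j y = [] then h j else 0) = (h 0 :: 'k::comm_monoid_add)"
  by (cases y) (simp_all add: sum.atMost_Suc_shift del: sum.atMost_Suc)

lemma coprod_tmul_primitive:
  assumes v: "primitive v"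
  shows "coprod (tmul v g) x y =
    (\<Sum>i\<le>length x. v (take i x) * coprod g (drop i x) y) +
    (\<Sum>j\<le>length y. v (take j y) * coprod g x (drop j y))"
proof -
  have "coprod (tmul v g) x y =
      (\<Sum>i\<le>length x. \<Sum>j\<le>length y.
         if take j y = [] then v (take i x) * coprod g (drop i x) (drop j y) else 0) +
      (\<Sum>j\<le>length y. \<Sum>i\<le>length x.
         if take i x = [] then v (take j y) * coprod g (drop i x) (drop j y) else 0)"
    unfolding coprod_tmul primitive_coprod[OF v] distrib_right sum.distrib if_distrib[of "\<lambda>a. a * _"]
      mult_zero_left
    by (subst (2) sum.swap) (rule refl)
  then show ?thesis
    by (simp only: sum_atMost_length_take_Nil take0 drop0)
qed

lemma sum_binomial_Suc:
  fixes A B :: "nat \<Rightarrow> 'k::comm_ring_1"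
  shows "(\<Sum>a\<le>Suc k. of_nat (Suc k choose a) * A a * B (Suc k - a)) =
    (\<Sum>a\<le>k. of_nat (k choose a) * A (Suc a) * B (k - a)) +
    (\<Sum>a\<le>k. of_nat (k choose a) * A a * B (Suc k - a))"
proof -
  have "(\<Sum>a\<le>k. of_nat (k choose a) * A a * B (Suc k - a)) =
      (\<Sum>a\<le>Suc k. of_nat (k choose a) * A a * B (Suc k - a))"
    by (simp add: binomial_eq_0)
  then show ?thesis
    by (simp add: sum.atMost_Suc_shift algebra_simps sum.distrib del: sum.atMost_Suc)
qed

lemma coprod_tpow_primitive:
  assumes v: "primitive v"
  shows "coprod (tpow v k) x y = (\<Sum>a\<le>k. of_nat (k choose a) * tpow v a x * tpow v (k - a) y)"
proof (induction k arbitrary: x y)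
  case 0
  then show ?case by (simp add: coprod_tone)
next
  case (Suc k)
  have "coprod (tpow v (Suc k)) x y =
      (\<Sum>i\<le>length x. v (take i x) * coprod (tpow v k) (drop i x) y) +
      (\<Sum>j\<le>length y. v (take j y) * coprod (tpow v k) x (drop j y))"
    by (simp add: coprod_tmul_primitive[OF v])
  also have "\<dots> =
      tmul v (\<lambda>t. \<Sum>a\<le>k. (of_nat (k choose a) * tpow v (k - a) y) * tpow v a t) x +
      tmul v (\<lambda>t. \<Sum>a\<le>k. (of_nat (k choose a) * tpow v a x) * tpow v (k - a) t) y"
    by (simp add: Suc.IH tmul_def ac_simps)
  also have "\<dots> = (\<Sum>a\<le>k. of_nat (k choose a) * tpow v (Suc a) x * tpow v (k - a) y)
      + (\<Sum>a\<le>k. of_nat (k choose a) * tpow v a x * tpow v (Suc (k - a)) y)"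
    unfolding tmul_sum_right by (simp add: ac_simps)
  also have "\<dots> = (\<Sum>a\<le>Suc k. of_nat (Suc k choose a) * tpow v a x * tpow v (Suc k - a) y)"
    unfolding sum_binomial_Suc[of _ "\<lambda>a. tpow v a x" "\<lambda>a. tpow v a y"]
    by (intro arg_cong2[where f = "(+)"] refl sum.cong) (simp_all add: Suc_diff_le)
  finally show ?case .
qed

section \<open>Adams operations\<close>

text \<open>\<open>adams N\<close> is the \<open>N\<close>-th convolution power of the identity, \<open>\<mu>\<^sup>N \<circ> \<Delta>\<^sup>N\<close>, with \<open>adams 0\<close> the
  projection to the constant term; on a product of \<open>k\<close> primitive elements it acts by \<open>N\<^sup>k\<close>.\<close>

primrec adams :: "nat \<Rightarrow> ('a, 'k::field) tser \<Rightarrow> ('a, 'k) tser" where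
  "adams 0 f = (\<lambda>w. if w = [] then f [] else 0)"
| "adams (Suc N) f = (\<lambda>w. \<Sum>i\<le>length w. adams N (\<lambda>s. coprod f s (drop i w)) (take i w))"

lemma adams_cong:
  "(\<And>s. length s = length w \<Longrightarrow> f s = g s) \<Longrightarrow> adams N f w = adams N g w"
proof (induction N arbitrary: f g w)
  case (Suc N)
  show ?case
    unfolding adams.simps
  proof (intro sum.cong refl Suc.IH coprod_cong)
    fix i and s s' :: "'a list"
    assume "i \<in> {..length w}" "length s = length (take i w)" "length s' = length s + length (drop i w)"
    then show "f s' = g s'" using Suc.prems by auto
  qed
qed simp

lemma adams_linear: "adams N (\<lambda>s. a * f s + b * g s) w = a * adams N f w + b * adams N g w"
  by (induction N arbitrary: f g w)
    (simp_all add: coprod_add coprod_scale sum.distrib sum_distrib_left)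

lemma adams_add: "adams N (\<lambda>s. f s + g s) w = adams N f w + adams N g w"
  using adams_linear[of N 1 f 1 g w] by simp

lemma adams_diff: "adams N (\<lambda>s. f s - g s) w = adams N f w - adams N g w"
  using adams_linear[of N 1 f "-1" g w] by simp

lemma adams_scale: "adams N (\<lambda>s. c * f s) w = c * adams N f w"
  using adams_linear[of N c f 0 f w] by simp

lemma adams_zero: "adams N (\<lambda>_. 0) w = 0"
  using adams_scale[of N 0 "\<lambda>_. 0" w] by simp

lemma adams_if: "adams N (\<lambda>s. if P then f s else 0) w = (if P then adams N f w else 0)"
  by (simp add: adams_zero)

lemma adams_sum:
  "finite K \<Longrightarrow> adams N (\<lambda>s. \<Sum>k\<in>K. f k s) w = (\<Sum>k\<in>K. adams N (f k) w)"
  by (induction K rule: finite_induct) (simp_all add: adams_zero adams_add)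

lemma adams_sum_scale:
  "finite K \<Longrightarrow> adams N (\<lambda>s. \<Sum>k\<in>K. c k * f k s) w = (\<Sum>k\<in>K. c k * adams N (f k) w)"
  by (simp add: adams_sum adams_scale)

lemma adams_tpow_primitive:
  assumes v: "primitive v"
  shows "adams N (tpow v k) w = of_nat N ^ k * tpow v k w"
proof (induction N arbitrary: k w)
  case 0
  show ?case
    using tpow_eq_0_if_shorter[of v "[]" k] primitive_Nil[OF v] by (cases k) (simp_all add: tone_def)
next
  case (Suc N)
  have "(\<lambda>s. coprod (tpow v k) s q) = (\<lambda>s. \<Sum>a\<le>k. (of_nat (k choose a) * tpow v (k - a) q) * tpow v a s)"
    for q
    by (simp add: coprod_tpow_primitive[OF v] fun_eq_iff ac_simps)
  then have "adams (Suc N) (tpow v k) w =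
      (\<Sum>i\<le>length w. \<Sum>a\<le>k. (of_nat (k choose a) * tpow v (k - a) (drop i w)) *
        (of_nat N ^ a * tpow v a (take i w)))"
    by (simp add: adams_sum_scale Suc.IH)
  also have "\<dots> = (\<Sum>a\<le>k. of_nat (k choose a) * of_nat N ^ a *
        (\<Sum>i\<le>length w. tpow v a (take i w) * tpow v (k - a) (drop i w)))"
    by (subst sum.swap) (simp add: sum_distrib_left ac_simps)
  also have "\<dots> = (\<Sum>a\<le>k. of_nat (k choose a) * of_nat N ^ a * tpow v k w)"
  proof (intro sum.cong refl)
    fix a
    assume "a \<in> {..k}"
    then have "tpow v k w = tmul (tpow v a) (tpow v (k - a)) w"
      using tpow_add[of v a "k - a" w] by simp
    then show "of_nat (k choose a) * of_nat N ^ a *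
        (\<Sum>i\<le>length w. tpow v a (take i w) * tpow v (k - a) (drop i w)) =
        of_nat (k choose a) * of_nat N ^ a * tpow v k w"
      by (simp add: tmul_def)
  qed
  also have "\<dots> = (of_nat N + 1) ^ k * tpow v k w"
    by (simp add: binomial_ring sum_distrib_right)
  finally show ?case by (simp add: add.commute)
qed

section \<open>Brackets with letters\<close>

definition lmul_letter :: "'a \<Rightarrow> ('a, 'k::field) tser \<Rightarrow> ('a, 'k) tser" where
  "lmul_letter z f w = (case w of [] \<Rightarrow> 0 | a # t \<Rightarrow> if a = z then f t else 0)"

definition rmul_letter :: "'a \<Rightarrow> ('a, 'k::field) tser \<Rightarrow> ('a, 'k) tser" where
  "rmul_letter z f w = (if w = [] then 0 else if last w = z then f (butlast w) else 0)"

definition letter_bracket :: "'a \<Rightarrow> ('a, 'k::field) tser \<Rightarrow> ('a, 'k) tser" where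
  "letter_bracket z f = (\<lambda>w. lmul_letter z f w - rmul_letter z f w)"

lemma lmul_letter_Nil [simp]: "lmul_letter z f [] = 0"
  by (simp add: lmul_letter_def)

lemma lmul_letter_Cons [simp]: "lmul_letter z f (a # t) = (if a = z then f t else 0)"
  by (simp add: lmul_letter_def)

lemma rmul_letter_Nil [simp]: "rmul_letter z f [] = 0"
  by (simp add: rmul_letter_def)

lemma rmul_letter_snoc [simp]: "rmul_letter z f (t @ [a]) = (if a = z then f t else 0)"
  by (simp add: rmul_letter_def)

lemma rmul_letter_Cons:
  "rmul_letter z f (a # t) =
     (if t = [] then (if a = z then f [] else 0) else rmul_letter z (\<lambda>s. f (a # s)) t)"
  by (simp add: rmul_letter_def)

lemma lmul_letter_scale: "lmul_letter z (\<lambda>t. c * f t) w = c * lmul_letter z f w"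
  by (cases w) simp_all

lemma rmul_letter_scale: "rmul_letter z (\<lambda>t. c * f t) w = c * rmul_letter z f w"
  by (simp add: rmul_letter_def)

text \<open>Letters are primitive, so \<open>\<Delta>(z f) = (z \<otimes> 1 + 1 \<otimes> z) \<Delta> f\<close>, and likewise for \<open>f z\<close>.\<close>

lemma coprod_lmul_letter:
  "coprod (lmul_letter z f) x y =
     lmul_letter z (\<lambda>x'. coprod f x' y) x + lmul_letter z (\<lambda>y'. coprod f x y') y"
  by (cases x; cases y) (simp_all add: coprod_Cons_Cons coprod_if)

lemma coprod_rmul_letter:
  "coprod (rmul_letter z f) x y =
     rmul_letter z (\<lambda>x'. coprod f x' y) x + rmul_letter z (\<lambda>y'. coprod f x y') y"
proof (induction x y arbitrary: f rule: shuffle.induct)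
  case (3 a x b y)
  have rmul_Cons_fun: "(\<lambda>t. rmul_letter z f (c # t)) =
      (\<lambda>t. rmul_letter z (\<lambda>s. f (c # s)) t + (if t = [] then (if c = z then f [] else 0) else 0))" for c
    by (auto simp: rmul_letter_Cons fun_eq_iff)
  show ?case
    unfolding coprod_Cons_Cons[of "rmul_letter z f"] rmul_Cons_fun coprod_add coprod_indicator_Nil "3.IH"
    by (simp add: rmul_letter_Cons coprod_Cons_Cons rmul_letter_def)
qed simp_all

text \<open>\<open>deconc F\<close> is the concatenation product applied to the tensor with coefficients \<open>F\<close>.\<close>

definition deconc :: "('a list \<Rightarrow> 'a list \<Rightarrow> 'k::field) \<Rightarrow> ('a, 'k) tser" where
  "deconc F w = (\<Sum>i\<le>length w. F (take i w) (drop i w))"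

lemma adams_Suc_deconc: "adams (Suc N) f w = deconc (\<lambda>p q. adams N (\<lambda>s. coprod f s q) p) w"
  by (simp add: deconc_def)

lemma deconc_add: "deconc (\<lambda>p q. F p q + G p q) w = deconc F w + deconc G w"
  by (simp add: deconc_def sum.distrib)

lemma deconc_diff: "deconc (\<lambda>p q. F p q - G p q) w = deconc F w - deconc G w"
  by (simp add: deconc_def sum_subtractf)

lemma lmul_letter_deconc: "lmul_letter z (deconc F) w = deconc (\<lambda>p q. lmul_letter z (\<lambda>p'. F p' q) p) w"
  by (cases w) (simp_all add: deconc_def sum.atMost_Suc_shift del: sum.atMost_Suc)

lemma rmul_letter_deconc: "rmul_letter z (deconc F) w = deconc (\<lambda>p q. rmul_letter z (\<lambda>q'. F p q') q) w"
proof (cases w rule: rev_exhaust)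
  case (snoc t a)
  have "deconc (\<lambda>p q. rmul_letter z (\<lambda>q'. F p q') q) w =
      (\<Sum>i\<le>length t. rmul_letter z (\<lambda>q'. F (take i w) q') (drop i w))"
    using snoc by (simp add: deconc_def)
  also have "\<dots> = (\<Sum>i\<le>length t. if a = z then F (take i t) (drop i t) else 0)"
    using snoc by (intro sum.cong refl) auto
  finally show ?thesis
    using snoc by (simp add: deconc_def)
qed (simp add: deconc_def)

lemma deconc_lmul_letter_right:
  "deconc (\<lambda>p q. lmul_letter z (\<lambda>q'. F p q') q) w = deconc (\<lambda>p q. rmul_letter z (\<lambda>p'. F p' q) p) w"
proof (cases w)
  case (Cons b t)
  have "deconc (\<lambda>p q. lmul_letter z (\<lambda>q'. F p q') q) w =
      (\<Sum>i\<le>length t. lmul_letter z (F (take i w)) (drop i w))"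
    using Cons by (simp add: deconc_def)
  also have "\<dots> = (\<Sum>i\<le>length t. if w ! i = z then F (take i w) (drop (Suc i) w) else 0)"
  proof (intro sum.cong refl)
    fix i
    assume "i \<in> {..length t}"
    then have "i < length w"
      using Cons by simp
    then have "drop i w = w ! i # drop (Suc i) w"
      by (rule Cons_nth_drop_Suc[symmetric])
    then show "lmul_letter z (F (take i w)) (drop i w) =
        (if w ! i = z then F (take i w) (drop (Suc i) w) else 0)"
      by simp
  qed
  also have "\<dots> = (\<Sum>i\<le>length t. rmul_letter z (\<lambda>p'. F p' (drop (Suc i) w)) (take (Suc i) w))"
  proof (intro sum.cong refl)
    fix i
    assume "i \<in> {..length t}"
    then have "i < length w"
      using Cons by simp
    then have "take (Suc i) w = take i w @ [w ! i]"
      by (rule take_Suc_conv_app_nth)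
    then show "(if w ! i = z then F (take i w) (drop (Suc i) w) else 0) =
        rmul_letter z (\<lambda>p'. F p' (drop (Suc i) w)) (take (Suc i) w)"
      by simp
  qed
  also have "\<dots> = deconc (\<lambda>p q. rmul_letter z (\<lambda>p'. F p' q) p) w"
    unfolding deconc_def using Cons by (simp add: sum.atMost_Suc_shift del: sum.atMost_Suc)
  finally show ?thesis .
qed (simp add: deconc_def)

lemma adams_lmul_letter_param:
  "adams N (\<lambda>s. lmul_letter z (G s) q) p = lmul_letter z (\<lambda>q'. adams N (\<lambda>s. G s q') p) q"
  by (cases q) (simp_all add: adams_zero adams_if)

lemma adams_rmul_letter_param:
  "adams N (\<lambda>s. rmul_letter z (G s) q) p = rmul_letter z (\<lambda>q'. adams N (\<lambda>s. G s q') p) q"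
  unfolding rmul_letter_def by (simp add: adams_zero adams_if)

lemma adams_letter_bracket: "adams N (letter_bracket z f) w = letter_bracket z (adams N f) w"
proof (induction N arbitrary: f w)
  case 0
  then show ?case
    by (cases w) (simp_all add: letter_bracket_def rmul_letter_def)
next
  case (Suc N)
  define F where "F p q = adams N (\<lambda>s. coprod f s q) p" for p q
  have "(\<lambda>s. coprod (letter_bracket z f) s q) =
      (\<lambda>s. letter_bracket z (\<lambda>p'. coprod f p' q) s +
        (lmul_letter z (\<lambda>q'. coprod f s q') q - rmul_letter z (\<lambda>q'. coprod f s q') q))" for q
    by (simp add: fun_eq_iff letter_bracket_def coprod_diff coprod_lmul_letter coprod_rmul_letter)
  then have "adams (Suc N) (letter_bracket z f) w =
      deconc (\<lambda>p q. letter_bracket z (\<lambda>p'. F p' q) p +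
        (lmul_letter z (\<lambda>q'. F p q') q - rmul_letter z (\<lambda>q'. F p q') q)) w"
    by (simp only: adams_Suc_deconc adams_add Suc.IH adams_diff
        adams_lmul_letter_param adams_rmul_letter_param F_def)
  also have "\<dots> = deconc (\<lambda>p q. lmul_letter z (\<lambda>p'. F p' q) p) w -
      deconc (\<lambda>p q. rmul_letter z (\<lambda>q'. F p q') q) w"
    unfolding letter_bracket_def deconc_add deconc_diff deconc_lmul_letter_right by simp
  also have "\<dots> = letter_bracket z (adams (Suc N) f) w"
    unfolding letter_bracket_def lmul_letter_deconc[symmetric] rmul_letter_deconc[symmetric] F_def
      adams_Suc_deconc[symmetric, abs_def]
    by simp
  finally show ?case .
qed

section \<open>The closure of the commutator span\<close>

definition trunc_closure :: "('a list \<Rightarrow> 'k) set \<Rightarrow> ('a list \<Rightarrow> 'k) set" where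
  "trunc_closure S = {f. \<forall>N. \<exists>g\<in>S. \<forall>w. length w < N \<longrightarrow> f w = g w}"

lemma comm_closure_eq_trunc_closure: "comm_closure = trunc_closure comm_span"
  by (simp add: comm_closure_def trunc_closure_def)

lemma subset_trunc_closure: "S \<subseteq> trunc_closure S"
  unfolding trunc_closure_def by blast

lemma trunc_closure_subset:
  assumes "S \<subseteq> trunc_closure T"
  shows "trunc_closure S \<subseteq> trunc_closure T"
proof
  fix f
  assume f: "f \<in> trunc_closure S"
  show "f \<in> trunc_closure T"
    unfolding trunc_closure_def
  proof (intro CollectI allI)
    fix N
    obtain g where "g \<in> S" and fg: "\<forall>w. length w < N \<longrightarrow> f w = g w"
      using f unfolding trunc_closure_def by blast
    then obtain h where "h \<in> T" and gh: "\<forall>w. length w < N \<longrightarrow> g w = h w"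
      using assms unfolding trunc_closure_def by blast
    then show "\<exists>h\<in>T. \<forall>w. length w < N \<longrightarrow> f w = h w"
      using fg by auto
  qed
qed

lemma trunc_closure_local_map:
  assumes "\<And>g. g \<in> S \<Longrightarrow> \<Phi> g \<in> S"
    and "\<And>f g w. (\<And>s. length s = length w \<Longrightarrow> f s = g s) \<Longrightarrow> \<Phi> f w = \<Phi> g w"
    and "f \<in> trunc_closure S"
  shows "\<Phi> f \<in> trunc_closure S"
  unfolding trunc_closure_def
proof (intro CollectI allI)
  fix N
  obtain g where "g \<in> S" and g: "\<forall>w. length w < N \<longrightarrow> f w = g w"
    using assms(3) unfolding trunc_closure_def by blast
  have "\<Phi> f w = \<Phi> g w" if "length w < N" for w
    using that g by (intro assms(2)) simp
  then show "\<exists>h\<in>S. \<forall>w. length w < N \<longrightarrow> \<Phi> f w = h w"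
    using assms(1)[OF \<open>g \<in> S\<close>] by blast
qed

lemma trunc_closure_add:
  assumes "\<And>f g. f \<in> S \<Longrightarrow> g \<in> S \<Longrightarrow> (\<lambda>w. f w + g w) \<in> S"
    and "f \<in> trunc_closure S" and "g \<in> trunc_closure S"
  shows "(\<lambda>w. f w + g w) \<in> trunc_closure S"
  unfolding trunc_closure_def
proof (intro CollectI allI)
  fix N
  obtain f' where "f' \<in> S" and "\<forall>w. length w < N \<longrightarrow> f w = f' w"
    using assms(2) unfolding trunc_closure_def by blast
  moreover obtain g' where "g' \<in> S" and "\<forall>w. length w < N \<longrightarrow> g w = g' w"
    using assms(3) unfolding trunc_closure_def by blast
  ultimately show "\<exists>h\<in>S. \<forall>w. length w < N \<longrightarrow> f w + g w = h w"
    using assms(1) by (intro bexI[of _ "\<lambda>w. f' w + g' w"]) auto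
qed

inductive_set letter_bracket_span :: "('a, 'k::field) tser set" where
  zero: "(\<lambda>_. 0) \<in> letter_bracket_span"
| add_bracket: "f \<in> letter_bracket_span \<Longrightarrow> (\<lambda>w. f w + letter_bracket z g w) \<in> letter_bracket_span"

lemma letter_bracket_span_add:
  assumes "f \<in> letter_bracket_span" and "g \<in> letter_bracket_span"
  shows "(\<lambda>w. f w + g w) \<in> letter_bracket_span"
  using assms(2)
proof (induction g rule: letter_bracket_span.induct)
  case (add_bracket g z h)
  then show ?case
    using letter_bracket_span.add_bracket[OF add_bracket.IH, of z h] by (simp add: add.assoc)
qed (use assms(1) in simp)

lemma letter_bracket_span_scale:
  "f \<in> letter_bracket_span \<Longrightarrow> (\<lambda>w. c * f w) \<in> letter_bracket_span"
proof (induction f rule: letter_bracket_span.induct)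
  case (add_bracket f z g)
  then show ?case
    using letter_bracket_span.add_bracket[OF add_bracket.IH, of z "\<lambda>t. c * g t"]
    by (simp add: letter_bracket_def lmul_letter_scale rmul_letter_scale algebra_simps)
qed (simp add: letter_bracket_span.zero)

lemma letter_bracket_span_sum:
  "finite K \<Longrightarrow> (\<And>k. k \<in> K \<Longrightarrow> f k \<in> letter_bracket_span) \<Longrightarrow>
    (\<lambda>w. \<Sum>k\<in>K. f k w) \<in> letter_bracket_span"
  by (induction K rule: finite_induct) (simp_all add: letter_bracket_span.zero letter_bracket_span_add)

lemma adams_letter_bracket_span: "f \<in> letter_bracket_span \<Longrightarrow> adams N f \<in> letter_bracket_span"
proof (induction f rule: letter_bracket_span.induct)
  case zero
  then show ?case
    using letter_bracket_span.zero by (simp add: adams_zero[abs_def])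
next
  case (add_bracket f z g)
  have "adams N (\<lambda>w. f w + letter_bracket z g w) = (\<lambda>w. adams N f w + letter_bracket z (adams N g) w)"
    by (simp add: fun_eq_iff adams_add adams_letter_bracket)
  then show ?case
    using letter_bracket_span.add_bracket[OF add_bracket.IH] by simp
qed

definition tword :: "'a list \<Rightarrow> ('a, 'k::field) tser" where
  "tword p = (\<lambda>w. if w = p then 1 else 0)"

lemma tword_Nil: "tword [] = tone"
  by (simp add: tword_def tone_def fun_eq_iff)

lemma tmul_tword_letter_left:
  fixes f :: "('a, 'k::field) tser"
  shows "tmul (tword [z]) f = lmul_letter z f"
proof
  fix w
  show "tmul (tword [z]) f w = lmul_letter z f w"
  proof (cases w)
    case (Cons a t)
    have "(\<lambda>s. tword [z] (a # s)) = (if a = z then tone else (\<lambda>_. 0 :: 'k))"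
      by (auto simp: tword_def tone_def fun_eq_iff)
    moreover have "tword [z] [] = (0 :: 'k)"
      by (simp add: tword_def)
    ultimately show ?thesis
      unfolding Cons tmul_Cons by (simp add: tmul_tone_left tmul_zero_left)
  qed (simp add: tword_def)
qed

lemma tmul_tword_letter_right: "tmul f (tword [z]) = rmul_letter z f"
proof
  fix w
  show "tmul f (tword [z]) w = rmul_letter z f w"
    by (induction w arbitrary: f) (auto simp: tmul_Cons tword_def rmul_letter_Cons split: if_splits)
qed

lemma tword_Cons: "tword (z # p) = tmul (tword [z]) (tword p)"
  unfolding tmul_tword_letter_left by (auto simp: fun_eq_iff tword_def lmul_letter_def split: list.split)

lemma letter_bracket_span_subset_comm_span:
  "(letter_bracket_span :: ('a, 'k::field) tser set) \<subseteq> comm_span"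
proof
  fix f :: "('a, 'k) tser"
  assume "f \<in> letter_bracket_span"
  then show "f \<in> comm_span"
  proof (induction f rule: letter_bracket_span.induct)
    case zero
    then show ?case
      using comm_span.zero by (simp add: tzero_def)
  next
    case (add_bracket f z g)
    then show ?case
      using comm_span.step[OF add_bracket.IH, of "tword [z]" g]
      by (simp add: tmul_tword_letter_left tmul_tword_letter_right letter_bracket_def add_diff_eq)
  qed
qed

text \<open>\<open>[z p, b] = [p, b z] + [z, p b]\<close>\<close>

lemma commutator_tword_in_letter_bracket_span:
  "(\<lambda>w. tmul (tword p) b w - tmul b (tword p) w) \<in> letter_bracket_span"
proof (induction p arbitrary: b)
  case Nil
  then show ?case
    by (simp add: tword_Nil tmul_tone_left tmul_tone_right letter_bracket_span.zero)
next
  case (Cons z p)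
  have "tmul (tword (z # p)) b w = lmul_letter z (tmul (tword p) b) w" for w
    using tmul_assoc[of "tword [z]" "tword p" b w] by (simp only: tword_Cons[of z p] tmul_tword_letter_left)
  moreover have "tmul b (tword (z # p)) w = tmul (rmul_letter z b) (tword p) w" for w
    using tmul_assoc[of b "tword [z]" "tword p" w]
    by (simp only: tword_Cons[of z p] tmul_tword_letter_left tmul_tword_letter_right)
  moreover have "rmul_letter z (tmul (tword p) b) w = tmul (tword p) (rmul_letter z b) w" for w
    using tmul_assoc[of "tword p" b "tword [z]" w] by (simp only: tmul_tword_letter_right)
  ultimately show ?case
    using letter_bracket_span.add_bracket[OF Cons.IH[of "rmul_letter z b"], of z "tmul (tword p) b"]
    by (simp add: letter_bracket_def algebra_simps)
qed

text \<open>Below any length, \<open>a\<close> agrees with a finite combination of words, because \<open>'a\<close> is finite.\<close>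

lemma commutator_in_trunc_closure:
  "(\<lambda>w. tmul a b w - tmul b a w) \<in> trunc_closure (letter_bracket_span :: ('a::finite, 'k::field) tser set)"
  unfolding trunc_closure_def
proof (intro CollectI allI)
  fix N
  define P where "P = {p :: 'a list. length p < N}"
  have "finite P"
    unfolding P_def using finite_lists_length_le[of "UNIV :: 'a set" N]
    by (rule finite_subset[rotated]) auto
  define a' where "a' t = (\<Sum>p\<in>P. a p * tword p t)" for t
  have a': "a' t = a t" if "length t < N" for t
  proof -
    have "a' t = (\<Sum>p\<in>P. if p = t then a p else 0)"
      unfolding a'_def tword_def by (intro sum.cong) auto
    then show ?thesis
      using that \<open>finite P\<close> by (simp add: P_def)
  qed
  have "(\<lambda>w. tmul a' b w - tmul b a' w) = (\<lambda>w. \<Sum>p\<in>P. a p * (tmul (tword p) b w - tmul b (tword p) w))"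
    unfolding a'_def[abs_def] tmul_sum_left tmul_sum_right
    by (simp add: fun_eq_iff algebra_simps sum_subtractf)
  also have "\<dots> \<in> letter_bracket_span"
    using \<open>finite P\<close>
    by (intro letter_bracket_span_sum letter_bracket_span_scale commutator_tword_in_letter_bracket_span)
  finally have "(\<lambda>w. tmul a' b w - tmul b a' w) \<in> letter_bracket_span" .
  moreover have "tmul a b w = tmul a' b w" and "tmul b a w = tmul b a' w" if "length w < N" for w
    using that by (auto intro: tmul_cong_left tmul_cong_right simp: a')
  ultimately show "\<exists>g\<in>letter_bracket_span. \<forall>w. length w < N \<longrightarrow> tmul a b w - tmul b a w = g w"
    by (intro bexI[of _ "\<lambda>w. tmul a' b w - tmul b a' w"]) simp_all
qed

lemma comm_closure_eq_letter_brackets: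
  "comm_closure = trunc_closure (letter_bracket_span :: ('a::finite, 'k::field) tser set)"
proof -
  have "comm_span \<subseteq> trunc_closure (letter_bracket_span :: ('a, 'k) tser set)"
  proof
    fix f :: "('a, 'k) tser"
    assume "f \<in> comm_span"
    then show "f \<in> trunc_closure letter_bracket_span"
    proof (induction f rule: comm_span.induct)
      case zero
      then show ?case
        unfolding tzero_def by (rule subsetD[OF subset_trunc_closure letter_bracket_span.zero])
    next
      case (step f a b)
      have "(\<lambda>w. f w + (tmul a b w - tmul b a w)) \<in> trunc_closure letter_bracket_span"
        by (intro trunc_closure_add letter_bracket_span_add step.IH commutator_in_trunc_closure)
      then show ?case
        by (simp add: add_diff_eq)
    qed
  qed
  moreover have "letter_bracket_span \<subseteq> trunc_closure (comm_span :: ('a, 'k) tser set)"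
    using letter_bracket_span_subset_comm_span subset_trunc_closure by (rule order_trans)
  ultimately show ?thesis
    unfolding comm_closure_eq_trunc_closure by (intro subset_antisym trunc_closure_subset)
qed

lemma comm_closure_add:
  "f \<in> comm_closure \<Longrightarrow> g \<in> comm_closure \<Longrightarrow>
    (\<lambda>w. f w + g w) \<in> (comm_closure :: ('a::finite, 'k::field) tser set)"
  unfolding comm_closure_eq_letter_brackets by (intro trunc_closure_add letter_bracket_span_add)

lemma comm_closure_scale:
  assumes "f \<in> (comm_closure :: ('a::finite, 'k::field) tser set)"
  shows "(\<lambda>w. c * f w) \<in> comm_closure"
  using assms unfolding comm_closure_eq_letter_brackets
proof (rule trunc_closure_local_map[rotated 2])
  show "(\<lambda>w. c * g w) \<in> letter_bracket_span" if "g \<in> letter_bracket_span" for g :: "('a, 'k) tser"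
    using that by (rule letter_bracket_span_scale)
qed simp

lemma comm_closure_lincomb:
  "finite K \<Longrightarrow> (\<And>k. k \<in> K \<Longrightarrow> f k \<in> comm_closure) \<Longrightarrow>
    (\<lambda>w. \<Sum>k\<in>K. c k * f k w) \<in> (comm_closure :: ('a::finite, 'k::field) tser set)"
proof (induction K rule: finite_induct)
  case empty
  then show ?case
    using letter_bracket_span.zero subset_trunc_closure
    unfolding comm_closure_eq_letter_brackets by auto
next
  case (insert k K)
  then show ?case
    by (simp add: comm_closure_add comm_closure_scale)
qed

lemma adams_comm_closure:
  assumes "f \<in> (comm_closure :: ('a::finite, 'k::field) tser set)"
  shows "adams N f \<in> comm_closure"
  using assms unfolding comm_closure_eq_letter_brackets
proof (rule trunc_closure_local_map[rotated 2])
  show "adams N g \<in> letter_bracket_span" if "g \<in> letter_bracket_span" for g :: "('a, 'k) tser"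
    using that by (rule adams_letter_bracket_span)
qed (rule adams_cong)

lemma comm_closure_closed:
  assumes "\<And>N. \<exists>g\<in>comm_closure. \<forall>w. length w < N \<longrightarrow> f w = g w"
  shows "f \<in> (comm_closure :: ('a::finite, 'k::field) tser set)"
proof -
  have "f \<in> trunc_closure comm_closure"
    using assms unfolding trunc_closure_def by blast
  moreover have "trunc_closure comm_closure \<subseteq> (comm_closure :: ('a, 'k) tser set)"
    unfolding comm_closure_eq_letter_brackets by (rule trunc_closure_subset) (rule order_refl)
  ultimately show ?thesis
    by blast
qed

section \<open>Lagrange interpolation\<close>

definition lagrange_basis :: "'k::field set \<Rightarrow> 'k \<Rightarrow> 'k poly" where
  "lagrange_basis A a = (\<Prod>b\<in>A - {a}. smult (1 / (a - b)) [:- b, 1:])"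

lemma degree_lagrange_basis:
  assumes "finite A" and "a \<in> A"
  shows "degree (lagrange_basis A a) < card A"
proof -
  have "degree (lagrange_basis A a) \<le> sum (degree \<circ> (\<lambda>b. smult (1 / (a - b)) [:- b, 1:])) (A - {a})"
    unfolding lagrange_basis_def using assms(1) by (intro degree_prod_sum_le) simp
  also have "\<dots> \<le> (\<Sum>b\<in>A - {a}. 1)"
    by (intro sum_mono) (simp only: comp_apply, rule order_trans[OF degree_smult_le], simp)
  also have "\<dots> < card A"
  proof -
    have "card A > 0"
      using assms card_gt_0_iff by blast
    then show ?thesis
      using assms by simp
  qed
  finally show ?thesis .
qed

lemma poly_lagrange_basis:
  assumes "finite A" and "a \<in> A" and "b \<in> A"
  shows "poly (lagrange_basis A a) b = (if b = a then 1 else 0)"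
proof (cases "b = a")
  case True
  have "poly (smult (1 / (a - c)) [:- c, 1:]) a = 1" if "c \<in> A - {a}" for c
  proof -
    have "a - c \<noteq> 0"
      using that by auto
    moreover have "poly [:- c, 1:] a = a - c"
      by (simp add: algebra_simps)
    ultimately show ?thesis
      unfolding poly_smult by simp
  qed
  then have "poly (lagrange_basis A a) a = 1"
    unfolding lagrange_basis_def poly_prod by (intro prod.neutral) blast
  then show ?thesis
    using True by simp
next
  case False
  have "poly (lagrange_basis A a) b = 0"
    unfolding lagrange_basis_def poly_prod using assms False by (intro prod_zero bexI[of _ b]) auto
  then show ?thesis
    using False by simp
qed

lemma lagrange_interpolation:
  assumes "finite A" and "degree p < card A"
  shows "p = (\<Sum>a\<in>A. smult (poly p a) (lagrange_basis A a))"
proof (rule poly_eqI_degree[of A])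
  fix b assume "b \<in> A"
  then show "poly p b = poly (\<Sum>a\<in>A. smult (poly p a) (lagrange_basis A a)) b"
    using assms(1) by (simp add: poly_sum poly_lagrange_basis if_distrib[of "\<lambda>x. _ * x"] cong: if_cong)
next
  show "degree (\<Sum>a\<in>A. smult (poly p a) (lagrange_basis A a)) < card A"
  proof (rule degree_sum_less)
    fix a
    assume "a \<in> A"
    then show "degree (smult (poly p a) (lagrange_basis A a)) < card A"
      by (rule le_less_trans[OF degree_smult_le degree_lagrange_basis[OF assms(1)]])
  next
    show "card A > 0"
      using assms(2) by simp
  qed
qed (fact assms(2))

text \<open>The coefficients of the Lagrange basis invert the Vandermonde matrix of \<open>A\<close>.\<close>

lemma sum_coeff_lagrange_basis_power:
  assumes "finite A" and "k < card A"
  shows "(\<Sum>a\<in>A. coeff (lagrange_basis A a) m * a ^ k) = (if k = m then 1 else 0)"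
proof -
  have "monom 1 k = (\<Sum>a\<in>A. smult (a ^ k) (lagrange_basis A a))"
    using lagrange_interpolation[OF assms(1), of "monom 1 k"] assms(2)
    by (simp add: degree_monom_eq poly_monom)
  then have "coeff (monom 1 k) m = (\<Sum>a\<in>A. a ^ k * coeff (lagrange_basis A a) m)"
    by (simp add: coeff_sum)
  then show ?thesis
    by (simp add: coeff_monom mult.commute)
qed

section \<open>Separating the weights\<close>

text \<open>Below length \<open>N\<^sub>0\<close> only the weights \<open>k \<le> D = N\<^sub>0 + m\<close> occur, and there \<open>Y\<^sub>m\<close> is the
  combination of \<open>adams 0 X, \<dots>, adams D X\<close> given by the inverse Vandermonde matrix.\<close>

lemma weight_component_in_comm_closure:
  fixes X :: "('a::finite, 'k::field_char_0) tser" and Y :: "nat \<Rightarrow> ('a, 'k) tser"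
  assumes X: "X \<in> comm_closure"
    and X_eq: "\<And>w. X w = (\<Sum>k\<le>length w. Y k w)"
    and adams_Y: "\<And>N k w. adams N (Y k) w = of_nat N ^ k * Y k w"
    and Y_short: "\<And>k w. length w < k \<Longrightarrow> Y k w = 0"
  shows "Y m \<in> comm_closure"
proof (rule comm_closure_closed)
  fix N\<^sub>0
  define D where "D = N\<^sub>0 + m"
  define A where "A = (of_nat ` {..D} :: 'k set)"
  define coef where "coef N = coeff (lagrange_basis A (of_nat N)) m" for N
  have coef: "(\<Sum>N\<le>D. coef N * of_nat N ^ k) = (if k = m then 1 else 0)" if "k \<le> D" for k
  proof -
    have inj: "inj_on (of_nat :: nat \<Rightarrow> 'k) {..D}"
      by (simp add: inj_on_def)
    then have "card A = Suc D"
      by (simp add: A_def card_image)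
    then have "(\<Sum>a\<in>A. coeff (lagrange_basis A a) m * a ^ k) = (if k = m then 1 else 0)"
      using that by (intro sum_coeff_lagrange_basis_power) (simp_all add: A_def)
    then show ?thesis
      by (simp add: A_def sum.reindex[OF inj] coef_def)
  qed
  have adams_X: "adams N X w = (\<Sum>k\<le>length w. of_nat N ^ k * Y k w)" for N w
  proof -
    have "adams N X w = adams N (\<lambda>s. \<Sum>k\<le>length w. Y k s) w"
      by (rule adams_cong) (simp add: X_eq)
    then show ?thesis
      by (simp add: adams_sum adams_Y)
  qed
  have "Y m w = (\<Sum>N\<le>D. coef N * adams N X w)" if "length w < N\<^sub>0" for w
  proof -
    have "(\<Sum>N\<le>D. coef N * adams N X w) = (\<Sum>k\<le>length w. (\<Sum>N\<le>D. coef N * of_nat N ^ k) * Y k w)"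
      unfolding adams_X sum_distrib_left sum_distrib_right mult.assoc by (rule sum.swap)
    also have "\<dots> = (\<Sum>k\<le>length w. if k = m then Y k w else 0)"
    proof (intro sum.cong refl)
      fix k
      assume "k \<in> {..length w}"
      then have "k \<le> D"
        using that by (simp add: D_def)
      then show "(\<Sum>N\<le>D. coef N * of_nat N ^ k) * Y k w = (if k = m then Y k w else 0)"
        by (simp add: coef)
    qed
    also have "\<dots> = Y m w"
      using Y_short[of w m] by auto
    finally show ?thesis ..
  qed
  moreover have "(\<lambda>w. \<Sum>N\<le>D. coef N * adams N X w) \<in> comm_closure"
    by (intro comm_closure_lincomb adams_comm_closure X) simp
  ultimately show "\<exists>g\<in>comm_closure. \<forall>w. length w < N\<^sub>0 \<longrightarrow> Y m w = g w"
    by (intro bexI[of _ "\<lambda>w. \<Sum>N\<le>D. coef N * adams N X w"]) simp_all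
qed

lemma tpow_components_in_comm_closure:
  fixes u :: "('a::finite, 'k::field_char_0) tser" and n :: nat
  assumes u: "primitive u" and v: "\<And>j. j \<le> n \<Longrightarrow> primitive (v j)"
    and "(\<lambda>w. texp u w - (\<Sum>j\<le>n. fseries (C j) (v j) w)) \<in> comm_closure"
  shows "(\<lambda>w. tpow u m w - (\<Sum>j\<le>n. (fact m * C j m) * tpow (v j) m w)) \<in> comm_closure"
proof -
  define Y where "Y k = (\<lambda>w. 1 / of_nat (fact k) * tpow u k w - (\<Sum>j\<le>n. C j k * tpow (v j) k w))"
    for k
  have "Y m \<in> comm_closure"
  proof (rule weight_component_in_comm_closure[OF assms(3)])
    fix w
    have "(\<Sum>j\<le>n. fseries (C j) (v j) w) = (\<Sum>k\<le>length w. \<Sum>j\<le>n. C j k * tpow (v j) k w)"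
      unfolding fseries_def by (rule sum.swap)
    then show "texp u w - (\<Sum>j\<le>n. fseries (C j) (v j) w) = (\<Sum>k\<le>length w. Y k w)"
      by (simp add: Y_def texp_def fseries_def sum_subtractf)
  next
    fix N k w
    have "adams N (Y k) w = 1 / of_nat (fact k) * adams N (tpow u k) w -
        (\<Sum>j\<le>n. C j k * adams N (tpow (v j) k) w)"
      unfolding Y_def adams_diff adams_scale by (subst adams_sum_scale) simp_all
    then show "adams N (Y k) w = of_nat N ^ k * Y k w"
      by (simp add: adams_tpow_primitive u v Y_def algebra_simps sum_distrib_left)
  next
    fix k and w :: "'a list"
    assume short: "length w < k"
    have "tpow u k w = 0"
      using tpow_eq_0_if_shorter[of u w k, OF primitive_Nil[OF u] short] .
    moreover have "tpow (v j) k w = 0" if "j \<le> n" for j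
      using tpow_eq_0_if_shorter[of "v j" w k, OF primitive_Nil[OF v[OF that]] short] .
    ultimately show "Y k w = 0"
      by (simp add: Y_def)
  qed
  then have "(\<lambda>w. fact m * Y m w) \<in> comm_closure"
    by (rule comm_closure_scale)
  then show ?thesis
    by (simp add: Y_def algebra_simps sum_distrib_left)
qed

theorem theorem3p3:
  fixes u :: "('a::finite, 'k::field_char_0) tser"
    and v :: "nat \<Rightarrow> ('a, 'k) tser"
    and n :: nat
  assumes "u \<in> free_lie"
    and "\<forall>j\<le>n. v j \<in> free_lie"
    and "trace_in (texp u)
           {(\<lambda>w. \<Sum>j\<le>n. s j w) | s. \<forall>j\<le>n. s j \<in> pseries_set (v j)}"
  shows "\<forall>m. trace_in (tpow u m)
           {(\<lambda>w. \<Sum>j\<le>n. c j * tpow (v j) m w) | c. True}"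
proof
  fix m
  obtain s where s: "\<forall>j\<le>n. s j \<in> pseries_set (v j)"
    and closure: "(\<lambda>w. texp u w - (\<Sum>j\<le>n. s j w)) \<in> comm_closure"
    using assms(3) unfolding trace_in_def by blast
  have "\<forall>j. \<exists>c. j \<le> n \<longrightarrow> s j = fseries c (v j)"
    using s unfolding pseries_set_def by blast
  then obtain C where "\<forall>j. j \<le> n \<longrightarrow> s j = fseries (C j) (v j)"
    by (rule choice[THEN exE])
  then have "(\<lambda>w. texp u w - (\<Sum>j\<le>n. fseries (C j) (v j) w)) \<in> comm_closure"
    using closure by simp
  then have "(\<lambda>w. tpow u m w - (\<Sum>j\<le>n. (fact m * C j m) * tpow (v j) m w)) \<in> comm_closure"
    using assms(1,2) by (intro tpow_components_in_comm_closure) (simp_all add: free_lie_def)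
  moreover have "(\<lambda>w. \<Sum>j\<le>n. (fact m * C j m) * tpow (v j) m w) \<in>
      {(\<lambda>w. \<Sum>j\<le>n. c j * tpow (v j) m w) | c. True}"
    by (intro CollectI exI[of _ "\<lambda>j. fact m * C j m"]) simp
  ultimately show "trace_in (tpow u m) {(\<lambda>w. \<Sum>j\<le>n. c j * tpow (v j) m w) | c. True}"
    unfolding trace_in_def by (rule bexI)
qed

end
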